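(* Every pairwise social choice correspondence that satisfies set non-imposition, homogeneity, and strategyproofness is strongly Condorcet-consistent.
   Context: Let $A$ be a finite set of alternatives; a preference profile $R$ assigns a strict total order $\succ_i$ on $A$ to each voter $i$ of a finite non-empty electorate $N\subseteq\{1,2,\dots\}$; $\mathcal{R}^*(A)$ is the set of all profiles over all electorates. $g_R(x,y)=|\{i: x\succ_i y\}|-|\{i: y\succ_i x\}|$; $x\succ_R y$ iff $g_R(x,y)>0$. A Condorcet winner is $x$ with $x\succ_R y$ for all $y\ne x$. An SCC is $f:\mathcal{R}^*(A)\to 2^A\setminus\{\emptyset\}$; pairwise: $f(R)=f(R')$ whenever $g_R=g_{R'}$; set non-imposing: for every non-empty $X\subseteq A$ some profile has $f(R)=X$; homogeneous: $f(kR)=f(R)$ for $k$ copies $kR$ of $R$; strongly Condorcet-consistent: $f(R)=\{x\}$ iff $x$ is the Condorcet winner in $R$. Fishburn's extension: for $X\ne Y$, $X\succ_i^F Y$ iff $x\succ_i y$ for all $x\in X\setminus Y,y\in Y$ and for all $x\in X,y\in Y\setminus X$; $f$ is strategyproof if no voter $i$ can change only his own preference to move from $R$ to $R'$ with $f(R')\succ_i^F f(R)$. *)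

theory Defs
  imports Main
begin

text \<open>Alternatives: the (finite) universe of type 'a.  A strict total order on the
alternatives is represented as a relation P (pairs (x,y) meaning x is strictly preferred to y).\<close>

definition strict_total_order :: "('a \<times> 'a) set \<Rightarrow> bool" where
  "strict_total_order P \<longleftrightarrow> irrefl P \<and> trans P \<and> (\<forall>x y. x \<noteq> y \<longrightarrow> (x, y) \<in> P \<or> (y, x) \<in> P)"

text \<open>A profile: partial map from voters (positive naturals) to preferences; the electorate
is the domain, which must be finite and non-empty.\<close>

type_synonym 'a profile = "nat \<Rightarrow> ('a \<times> 'a) set option"

definition is_profile :: "'a profile \<Rightarrow> bool" where
  "is_profile R \<longleftrightarrow> finite (dom R) \<and> dom R \<noteq> {} \<and> 0 \<notin> dom R
     \<and> (\<forall>i \<in> dom R. strict_total_order (the (R i)))"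

definition prefers :: "'a profile \<Rightarrow> nat \<Rightarrow> 'a \<Rightarrow> 'a \<Rightarrow> bool" where
  "prefers R i x y \<longleftrightarrow> (x, y) \<in> the (R i)"

definition majority_margin :: "'a profile \<Rightarrow> 'a \<Rightarrow> 'a \<Rightarrow> int" where
  "majority_margin R x y =
     int (card {i \<in> dom R. prefers R i x y}) - int (card {i \<in> dom R. prefers R i y x})"

definition condorcet_winner :: "'a profile \<Rightarrow> 'a \<Rightarrow> bool" where
  "condorcet_winner R x \<longleftrightarrow> (\<forall>y. y \<noteq> x \<longrightarrow> majority_margin R x y > 0)"

definition is_SCC :: "('a profile \<Rightarrow> 'a set) \<Rightarrow> bool" where
  "is_SCC f \<longleftrightarrow> (\<forall>R. is_profile R \<longrightarrow> f R \<noteq> {})"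

definition pairwise_SCC :: "('a profile \<Rightarrow> 'a set) \<Rightarrow> bool" where
  "pairwise_SCC f \<longleftrightarrow> (\<forall>R R'. is_profile R \<longrightarrow> is_profile R' \<longrightarrow>
      majority_margin R = majority_margin R' \<longrightarrow> f R = f R')"

definition set_non_imposing :: "('a profile \<Rightarrow> 'a set) \<Rightarrow> bool" where
  "set_non_imposing f \<longleftrightarrow> (\<forall>X. X \<noteq> {} \<longrightarrow> (\<exists>R. is_profile R \<and> f R = X))"

text \<open>k copies of R (k \<ge> 1): voter k*(i-1)+j+1 (j < k) is a copy of voter i.\<close>

definition copies :: "nat \<Rightarrow> 'a profile \<Rightarrow> 'a profile" where
  "copies k R = (\<lambda>v. if v \<ge> 1 then R ((v - 1) div k + 1) else None)"

definition homogeneous :: "('a profile \<Rightarrow> 'a set) \<Rightarrow> bool" where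
  "homogeneous f \<longleftrightarrow> (\<forall>R k. is_profile R \<longrightarrow> k \<ge> 1 \<longrightarrow> f (copies k R) = f R)"

definition strongly_condorcet_consistent :: "('a profile \<Rightarrow> 'a set) \<Rightarrow> bool" where
  "strongly_condorcet_consistent f \<longleftrightarrow>
     (\<forall>R. is_profile R \<longrightarrow> (\<forall>x. f R = {x} \<longleftrightarrow> condorcet_winner R x))"

definition fishburn :: "('a \<times> 'a) set \<Rightarrow> 'a set \<Rightarrow> 'a set \<Rightarrow> bool" where
  "fishburn P X Y \<longleftrightarrow> X \<noteq> Y
     \<and> (\<forall>x \<in> X - Y. \<forall>y \<in> Y. (x, y) \<in> P)
     \<and> (\<forall>x \<in> X. \<forall>y \<in> Y - X. (x, y) \<in> P)"

definition strategyproof :: "('a profile \<Rightarrow> 'a set) \<Rightarrow> bool" where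
  "strategyproof f \<longleftrightarrow> (\<forall>R R' i. is_profile R \<longrightarrow> is_profile R' \<longrightarrow> i \<in> dom R \<longrightarrow>
      (\<forall>j. j \<noteq> i \<longrightarrow> R' j = R j) \<longrightarrow> i \<in> dom R' \<longrightarrow>
      \<not> fishburn (the (R i)) (f R') (f R))"

end

theory Submission
  imports Defs "HOL-Library.Countable"
begin

text \<open>Strategyproofness lets us move between profiles without changing the choice X: add a
  voter with preference P together with one with the reverse of P (invisible to a pairwise
  rule) and let the first switch to P'. If P ranks every potential new outcome above X in
  Fishburn's sense, the outcome cannot change. Such switches can lift an alternative above an
  adjacent one, or lift the set X above all other alternatives, so if f R = {x} then
  f R' = {x} whenever the margins of x in R' are at least those in R (after doubling both
  profiles to fix parities). Together with homogeneity and set non-imposition this gives both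
  directions: a sufficiently replicated profile with Condorcet winner x dominates a profile
  choosing {x}; and if f R = {x} although some a is not beaten by x, a profile choosing {x, a},
  in which x is not beaten by a, can be made to dominate R, forcing {x, a} = {x}.\<close>

definition pref_margin :: "('a \<times> 'a) set \<Rightarrow> 'a \<Rightarrow> 'a \<Rightarrow> int" where
  "pref_margin P x y = (if (x, y) \<in> P then 1 else 0) - (if (y, x) \<in> P then 1 else 0)"

lemma pref_margin_converse: "pref_margin (converse P) x y = - pref_margin P x y"
  by (simp add: pref_margin_def)

lemma majority_margin_antisym: "majority_margin R x y = - majority_margin R y x"
  by (simp add: majority_margin_def)

lemma majority_margin_self [simp]: "majority_margin R x x = 0"
  by (simp add: majority_margin_def)

lemma majority_margin_eq_sum:
  assumes "finite (dom R)"
  shows "majority_margin R x y = (\<Sum>i\<in>dom R. pref_margin (the (R i)) x y)"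
  using assms
  by (simp add: majority_margin_def pref_margin_def prefers_def sum_subtractf
      flip: sum.inter_filter)

lemma majority_margin_fun_upd:
  assumes "finite (dom R)" "j \<notin> dom R"
  shows "majority_margin (R(j \<mapsto> Q)) x y = majority_margin R x y + pref_margin Q x y"
proof -
  have "(\<Sum>i\<in>dom R. pref_margin (the ((R(j \<mapsto> Q)) i)) x y) = (\<Sum>i\<in>dom R. pref_margin (the (R i)) x y)"
    using assms(2) by (intro sum.cong) auto
  then show ?thesis
    using assms by (simp add: majority_margin_eq_sum)
qed

lemma copies_apply:
  assumes "0 \<notin> dom R" "i \<in> dom R" "j < k"
  shows "copies k R ((i - 1) * k + j + 1) = R i"
proof -
  have "i \<ge> 1"
    using assms(1,2) by (cases i) auto
  then show ?thesis
    using assms(3) by (simp add: copies_def)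
qed

lemma bij_betw_copies_dom:
  assumes "k \<ge> 1" "0 \<notin> dom R"
  shows "bij_betw (\<lambda>(i, j). (i - 1) * k + j + 1) (dom R \<times> {..<k}) (dom (copies k R))"
proof -
  have pos: "Suc (i - 1) = i" if "R i = Some y" for i y
    using that assms(2) by (cases i) auto
  show ?thesis
    by (rule bij_betw_byWitness[where f' = "\<lambda>v. ((v - 1) div k + 1, (v - 1) mod k)"])
      (use assms(1) pos in \<open>auto simp: copies_def split: if_splits\<close>)
qed

lemma is_profile_copies:
  assumes "is_profile R" "k \<ge> 1"
  shows "is_profile (copies k R)"
proof -
  have "bij_betw (\<lambda>(i, j). (i - 1) * k + j + 1) (dom R \<times> {..<k}) (dom (copies k R))"
    using assms by (intro bij_betw_copies_dom) (auto simp: is_profile_def)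
  then have dom: "dom (copies k R) = (\<lambda>(i, j). (i - 1) * k + j + 1) ` (dom R \<times> {..<k})"
    by (simp add: bij_betw_def)
  have "dom R \<times> {..<k} \<noteq> {}"
    using assms by (auto simp: is_profile_def lessThan_empty_iff)
  moreover have "0 \<notin> dom (copies k R)"
    by (simp add: copies_def domIff)
  moreover have "strict_total_order (the (copies k R v))" if v: "v \<in> dom (copies k R)" for v
  proof -
    obtain i j where "i \<in> dom R" "j < k" "v = (i - 1) * k + j + 1"
      using v unfolding dom by auto
    then show ?thesis
      using assms(1) copies_apply[of R i j k] by (simp add: is_profile_def)
  qed
  ultimately show ?thesis
    using assms(1) by (simp add: is_profile_def dom)
qed

lemma majority_margin_copies:
  assumes "is_profile R" "k \<ge> 1"
  shows "majority_margin (copies k R) x y = int k * majority_margin R x y"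
proof -
  have bij: "bij_betw (\<lambda>(i, j). (i - 1) * k + j + 1) (dom R \<times> {..<k}) (dom (copies k R))"
    using assms by (intro bij_betw_copies_dom) (auto simp: is_profile_def)
  have fin: "finite (dom R)" and z: "0 \<notin> dom R"
    using assms(1) by (simp_all add: is_profile_def)
  have "majority_margin (copies k R) x y
      = (\<Sum>v\<in>dom (copies k R). pref_margin (the (copies k R v)) x y)"
    using bij_betw_finite[OF bij] fin by (intro majority_margin_eq_sum) simp
  also have "\<dots> = (\<Sum>p\<in>dom R \<times> {..<k}.
      pref_margin (the (copies k R ((\<lambda>(i, j). (i - 1) * k + j + 1) p))) x y)"
    by (rule sum.reindex_bij_betw[OF bij, symmetric])
  also have "\<dots> = (\<Sum>p\<in>dom R \<times> {..<k}. pref_margin (the (R (fst p))) x y)"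
  proof (rule sum.cong[OF refl])
    fix p assume "p \<in> dom R \<times> {..<k}"
    then obtain i j where "p = (i, j)" "i \<in> dom R" "j < k"
      by blast
    then show "pref_margin (the (copies k R ((\<lambda>(i, j). (i - 1) * k + j + 1) p))) x y
        = pref_margin (the (R (fst p))) x y"
      using copies_apply[OF z, of i j k] by simp
  qed
  also have "\<dots> = (\<Sum>i\<in>dom R. \<Sum>j<k. pref_margin (the (R i)) x y)"
    unfolding sum.cartesian_product by (simp add: case_prod_unfold)
  also have "\<dots> = int k * majority_margin R x y"
    using fin by (simp add: majority_margin_eq_sum sum_distrib_left)
  finally show ?thesis .
qed

lemma pairwise_SCCD:
  "pairwise_SCC f \<Longrightarrow> is_profile R \<Longrightarrow> is_profile R' \<Longrightarrow> majority_margin R = majority_margin R'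
    \<Longrightarrow> f R = f R'"
  unfolding pairwise_SCC_def by blast

lemma strict_total_order_converse: "strict_total_order P \<Longrightarrow> strict_total_order (converse P)"
  by (auto simp: strict_total_order_def irrefl_def)

lemma is_profile_fun_upd:
  "is_profile R \<Longrightarrow> j \<noteq> 0 \<Longrightarrow> strict_total_order Q \<Longrightarrow> is_profile (R(j \<mapsto> Q))"
  by (simp add: is_profile_def)

lemma strategyproof_shift:
  assumes pw: "pairwise_SCC f" and sp: "strategyproof f" and R: "is_profile R"
    and P: "strict_total_order P" and P': "strict_total_order P'"
  obtains R' where "is_profile R'"
    and "majority_margin R'
      = (\<lambda>x y. majority_margin R x y + pref_margin P' x y - pref_margin P x y)"
    and "\<not> fishburn P (f R') (f R)"
proof -
  define j where "j = Suc (Max (dom R))"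
  have fin: "finite (dom R)"
    using R by (simp add: is_profile_def)
  have fresh: "j \<notin> dom R" "Suc j \<notin> dom R"
    using fin Max_ge unfolding j_def by fastforce+
  define R1 where "R1 = R(j \<mapsto> P, Suc j \<mapsto> converse P)"
  define R2 where "R2 = R(j \<mapsto> P', Suc j \<mapsto> converse P)"
  have profiles: "is_profile R1" "is_profile R2"
    unfolding R1_def R2_def
    by (intro is_profile_fun_upd R P P' strict_total_order_converse; simp add: j_def)+
  have "majority_margin R1 = majority_margin R"
    using fin fresh by (intro ext) (simp add: R1_def majority_margin_fun_upd pref_margin_converse)
  then have "f R1 = f R"
    by (rule pairwise_SCCD[OF pw profiles(1) R])
  moreover have "\<not> fishburn (the (R1 j)) (f R2) (f R1)"
    using sp profiles unfolding strategyproof_def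
    by (auto simp: R1_def R2_def)
  moreover have "majority_margin R2
      = (\<lambda>x y. majority_margin R x y + pref_margin P' x y - pref_margin P x y)"
    using fin fresh by (intro ext) (simp add: R2_def majority_margin_fun_upd pref_margin_converse)
  ultimately show ?thesis
    using that profiles(2) by (simp add: R1_def)
qed

definition choice_stable_shift :: "('a profile \<Rightarrow> 'a set) \<Rightarrow> 'a set \<Rightarrow> ('a \<Rightarrow> 'a \<Rightarrow> int) \<Rightarrow> bool" where
  "choice_stable_shift f X D \<longleftrightarrow> (\<forall>R. is_profile R \<longrightarrow> f R = X \<longrightarrow>
     (\<exists>R'. is_profile R' \<and> majority_margin R' = (\<lambda>x y. majority_margin R x y + D x y) \<and> f R' = X))"

lemma choice_stable_shift_zero: "choice_stable_shift f X (\<lambda>x y. 0)"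
  by (auto simp: choice_stable_shift_def)

lemma choice_stable_shift_add:
  assumes "choice_stable_shift f X D" "choice_stable_shift f X E"
  shows "choice_stable_shift f X (\<lambda>x y. D x y + E x y)"
  unfolding choice_stable_shift_def
proof (intro allI impI)
  fix R assume "is_profile R" "f R = X"
  then obtain R1 where "is_profile R1" "f R1 = X"
    "majority_margin R1 = (\<lambda>x y. majority_margin R x y + D x y)"
    using assms(1) by (auto simp: choice_stable_shift_def)
  moreover from this obtain R2 where "is_profile R2" "f R2 = X"
    "majority_margin R2 = (\<lambda>x y. majority_margin R1 x y + E x y)"
    using assms(2) by (auto simp: choice_stable_shift_def)
  ultimately show "\<exists>R'. is_profile R'
      \<and> majority_margin R' = (\<lambda>x y. majority_margin R x y + (D x y + E x y)) \<and> f R' = X"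
    by (auto simp: add.assoc)
qed

lemma choice_stable_shift_scale:
  assumes "choice_stable_shift f X D"
  shows "choice_stable_shift f X (\<lambda>x y. int n * D x y)"
proof (induction n)
  case 0
  then show ?case by (simp add: choice_stable_shift_zero)
next
  case (Suc n)
  then have "choice_stable_shift f X (\<lambda>x y. int n * D x y + D x y)"
    using assms by (rule choice_stable_shift_add)
  then show ?case by (simp add: algebra_simps)
qed

text \<open>The orders may depend on Y: realising the shift once yields some choice Y, and realising
  it again with orders for which P prefers Y to X leads, by pairwiseness, to the same choice Y,
  which strategyproofness then forces to be X.\<close>

lemma choice_stable_shift_if_orders:
  assumes pw: "pairwise_SCC f" and sp: "strategyproof f"
    and orders: "\<And>Y. \<exists>P P'. strict_total_order P \<and> strict_total_order P'
      \<and> (\<forall>x y. pref_margin P' x y - pref_margin P x y = D x y) \<and> (Y \<noteq> X \<longrightarrow> fishburn P Y X)"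
  shows "choice_stable_shift f X D"
  unfolding choice_stable_shift_def
proof (intro allI impI)
  fix R assume R: "is_profile R" and X: "f R = X"
  have shift: "\<exists>R'. is_profile R' \<and> majority_margin R' = (\<lambda>x y. majority_margin R x y + D x y)
      \<and> \<not> fishburn P (f R') X"
    if P: "strict_total_order P" and P': "strict_total_order P'"
      and diff: "\<forall>x y. pref_margin P' x y - pref_margin P x y = D x y" for P P'
  proof -
    obtain R' where "is_profile R'" "\<not> fishburn P (f R') X"
      "majority_margin R' = (\<lambda>x y. majority_margin R x y + pref_margin P' x y - pref_margin P x y)"
      using strategyproof_shift[OF pw sp R P P'] X by blast
    with diff show ?thesis
      by (metis add_diff_eq)
  qed
  obtain R0 where R0: "is_profile R0" "majority_margin R0 = (\<lambda>x y. majority_margin R x y + D x y)"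
    using orders[of X] shift by blast
  obtain P P' where "strict_total_order P" "strict_total_order P'"
    "\<forall>x y. pref_margin P' x y - pref_margin P x y = D x y"
    and fishburn: "f R0 \<noteq> X \<longrightarrow> fishburn P (f R0) X"
    using orders[of "f R0"] by blast
  then obtain R1 where R1: "is_profile R1"
    "majority_margin R1 = (\<lambda>x y. majority_margin R x y + D x y)"
    and "\<not> fishburn P (f R1) X"
    using shift by blast
  moreover have "f R1 = f R0"
    using pw R1(1) R0(1) by (rule pairwise_SCCD) (simp add: R1(2) R0(2))
  ultimately have "f R0 = X"
    using fishburn by auto
  with R0 show "\<exists>R'. is_profile R'
      \<and> majority_margin R' = (\<lambda>x y. majority_margin R x y + D x y) \<and> f R' = X"
    by blast
qed

definition rank_order :: "('a::countable \<Rightarrow> nat) \<Rightarrow> ('a \<times> 'a) set" where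
  "rank_order t = {(u, w). t u < t w \<or> t u = t w \<and> to_nat u < to_nat w}"

lemma strict_total_order_rank_order: "strict_total_order (rank_order t)"
  unfolding strict_total_order_def rank_order_def irrefl_def trans_def
  by (auto simp: not_less_iff_gr_or_eq)

lemma fishburn_rank_order:
  assumes "Y \<noteq> X" and "\<And>y z. y \<in> Y \<Longrightarrow> z \<in> X \<Longrightarrow> y \<notin> X \<or> z \<notin> Y \<Longrightarrow> t y < t z"
  shows "fishburn (rank_order t) Y X"
  using assms by (auto simp: fishburn_def rank_order_def)

definition pair_margin :: "'a \<Rightarrow> 'a \<Rightarrow> 'a \<Rightarrow> 'a \<Rightarrow> int" where
  "pair_margin c d x y = (if x = c \<and> y = d then 1 else if x = d \<and> y = c then -1 else 0)"

definition block_margin :: "'a set \<Rightarrow> 'a \<Rightarrow> 'a \<Rightarrow> int" where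
  "block_margin X x y = (if x \<in> X \<and> y \<notin> X then 1 else if x \<notin> X \<and> y \<in> X then -1 else 0)"

text \<open>Moving d from just above c to just below c; all other ranks are even and differ from the
  rank of c, so no other alternative lies between the two positions of d.\<close>

lemma pref_margin_rank_order_swap:
  assumes "c \<noteq> d" "even (t c)" "t c > 0"
    and others: "\<And>u. u \<noteq> c \<Longrightarrow> u \<noteq> d \<Longrightarrow> even (t u) \<and> t u \<noteq> t c"
  shows "pref_margin (rank_order (t(d := t c + 1))) x y
      - pref_margin (rank_order (t(d := t c - 1))) x y = 2 * pair_margin c d x y"
proof -
  have "u = c \<or> u = d \<or> t u + 1 < t c \<or> t c + 1 < t u" for u
  proof (cases "u = c \<or> u = d")
    case False
    then have "even (t u)" "t u \<noteq> t c"
      using others by auto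
    with assms(2) have "t u + 1 < t c \<or> t c + 1 < t u"
      by (auto elim!: evenE)
    then show ?thesis by simp
  qed auto
  from this[of x] this[of y] show ?thesis
    using assms(1,3)
    by (cases "x = c"; cases "y = c"; cases "x = d"; cases "y = d")
      (auto simp: pref_margin_def rank_order_def pair_margin_def)
qed

lemma choice_stable_shift_pair:
  fixes f :: "('a::countable) profile \<Rightarrow> 'a set"
  assumes pw: "pairwise_SCC f" and sp: "strategyproof f" and "c \<noteq> d" "d \<noteq> x"
  shows "choice_stable_shift f {x} (\<lambda>u w. 2 * pair_margin c d u w)"
proof (rule choice_stable_shift_if_orders[OF pw sp])
  fix Y
  define t :: "'a \<Rightarrow> nat" where
    "t u = (if u = c then if c = x then 4 else 2 else if u = x then 4 else if u \<in> Y then 0 else 8)"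
    for u
  let ?P = "rank_order (t(d := t c - 1))" and ?P' = "rank_order (t(d := t c + 1))"
  have "pref_margin ?P' u w - pref_margin ?P u w = 2 * pair_margin c d u w" for u w
    using \<open>c \<noteq> d\<close> by (intro pref_margin_rank_order_swap) (auto simp: t_def)
  moreover have "fishburn ?P Y {x}" if "Y \<noteq> {x}"
    using that \<open>d \<noteq> x\<close> by (intro fishburn_rank_order) (auto simp: t_def)
  ultimately show "\<exists>P P'. strict_total_order P \<and> strict_total_order P'
      \<and> (\<forall>u w. pref_margin P' u w - pref_margin P u w = 2 * pair_margin c d u w)
      \<and> (Y \<noteq> {x} \<longrightarrow> fishburn P Y {x})"
    using strict_total_order_rank_order by blast
qed

lemma choice_stable_shift_block:
  fixes f :: "('a::countable) profile \<Rightarrow> 'a set"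
  assumes pw: "pairwise_SCC f" and sp: "strategyproof f"
  shows "choice_stable_shift f X (\<lambda>u w. 2 * block_margin X u w)"
proof (rule choice_stable_shift_if_orders[OF pw sp])
  fix Y
  define t :: "'a \<Rightarrow> nat" where "t u = (if u \<notin> X then 1 else if u \<in> Y then 2 else 3)" for u
  define t' :: "'a \<Rightarrow> nat" where "t' u = (if u \<notin> X then 4 else t u)" for u
  have "pref_margin (rank_order t') u w - pref_margin (rank_order t) u w = 2 * block_margin X u w"
    for u w
    by (cases "u \<in> X"; cases "w \<in> X"; cases "u \<in> Y"; cases "w \<in> Y")
      (simp_all add: t_def t'_def pref_margin_def rank_order_def block_margin_def)
  moreover have "fishburn (rank_order t) Y X" if "Y \<noteq> X"
    using that by (intro fishburn_rank_order) (auto simp: t_def)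
  ultimately show "\<exists>P P'. strict_total_order P \<and> strict_total_order P'
      \<and> (\<forall>u w. pref_margin P' u w - pref_margin P u w = 2 * block_margin X u w)
      \<and> (Y \<noteq> X \<longrightarrow> fishburn P Y X)"
    using strict_total_order_rank_order by blast
qed

lemma choice_stable_shift_singleton:
  fixes f :: "('a::finite) profile \<Rightarrow> 'a set"
  assumes pw: "pairwise_SCC f" and sp: "strategyproof f"
  shows "(\<And>u w. D u w = - D w u) \<Longrightarrow> (\<And>w. 0 \<le> D x w) \<Longrightarrow> choice_stable_shift f {x} (\<lambda>u w. 2 * D u w)"
proof (induction "card {(u, w). 0 < D u w}" arbitrary: D rule: less_induct)
  case less
  show ?case
  proof (cases "\<exists>c d. 0 < D c d")
    case False
    have "D u w = 0" for u w
      using False less.prems(1)[of u w] by (metis neg_less_0_iff_less not_less_iff_gr_or_eq)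
    then have "(\<lambda>u w. 2 * D u w) = (\<lambda>u w. 0)"
      by simp
    then show ?thesis
      by (simp add: choice_stable_shift_zero)
  next
    case True
    then obtain c d where cd: "0 < D c d" by blast
    have "c \<noteq> d"
      using less.prems(1)[of c c] cd by auto
    have "d \<noteq> x"
      using less.prems(1)[of c x] less.prems(2)[of c] cd by auto
    define D' where "D' u w = (if {u, w} = {c, d} then 0 else D u w)" for u w
    have "{(u, w). 0 < D' u w} \<subset> {(u, w). 0 < D u w}"
      using cd by (auto simp: D'_def split: if_splits)
    then have "card {(u, w). 0 < D' u w} < card {(u, w). 0 < D u w}"
      by (simp add: psubset_card_mono)
    moreover have "D' u w = - D' w u" for u w
      using less.prems(1)[of u w] by (simp add: D'_def insert_commute)
    moreover have "0 \<le> D' x w" for w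
      using less.prems(2) \<open>d \<noteq> x\<close> by (auto simp: D'_def doubleton_eq_iff)
    ultimately have "choice_stable_shift f {x} (\<lambda>u w. 2 * D' u w)"
      by (rule less.hyps)
    moreover have "choice_stable_shift f {x} (\<lambda>u w. int (nat (D c d)) * (2 * pair_margin c d u w))"
      using choice_stable_shift_pair[OF pw sp \<open>c \<noteq> d\<close> \<open>d \<noteq> x\<close>] by (rule choice_stable_shift_scale)
    ultimately have "choice_stable_shift f {x}
        (\<lambda>u w. 2 * D' u w + int (nat (D c d)) * (2 * pair_margin c d u w))"
      by (rule choice_stable_shift_add)
    moreover have "(\<lambda>u w. 2 * D' u w + int (nat (D c d)) * (2 * pair_margin c d u w))
        = (\<lambda>u w. 2 * D u w)"
      using cd less.prems(1)[of d c] \<open>c \<noteq> d\<close>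
      by (auto simp: fun_eq_iff D'_def pair_margin_def doubleton_eq_iff)
    ultimately show ?thesis
      by simp
  qed
qed

lemma homogeneousD: "homogeneous f \<Longrightarrow> is_profile R \<Longrightarrow> k \<ge> 1 \<Longrightarrow> f (copies k R) = f R"
  by (simp add: homogeneous_def)

text \<open>Doubling both profiles makes all margin differences even, as required for shifts built from
  single preference switches.\<close>

lemma singleton_choice_mono:
  fixes f :: "('a::finite) profile \<Rightarrow> 'a set"
  assumes pw: "pairwise_SCC f" and sp: "strategyproof f" and hom: "homogeneous f"
    and R: "is_profile R" and R': "is_profile R'" and fR: "f R = {x}"
    and le: "\<And>w. majority_margin R x w \<le> majority_margin R' x w"
  shows "f R' = {x}"
proof -
  define D where "D u w = majority_margin R' u w - majority_margin R u w" for u w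
  have "D u w = - D w u" for u w
    using majority_margin_antisym[of R' u w] majority_margin_antisym[of R u w] by (simp add: D_def)
  moreover have "0 \<le> D x w" for w
    using le[of w] by (simp add: D_def)
  ultimately have "choice_stable_shift f {x} (\<lambda>u w. 2 * D u w)"
    by (rule choice_stable_shift_singleton[OF pw sp])
  moreover have "is_profile (copies 2 R)" "f (copies 2 R) = {x}"
    using R fR homogeneousD[OF hom R] by (simp_all add: is_profile_copies)
  ultimately obtain R'' where R'': "is_profile R''" "f R'' = {x}"
    "majority_margin R'' = (\<lambda>u w. majority_margin (copies 2 R) u w + 2 * D u w)"
    unfolding choice_stable_shift_def by blast
  have "majority_margin R'' = majority_margin (copies 2 R')"
    using R R' by (simp add: R''(3) D_def majority_margin_copies fun_eq_iff algebra_simps)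
  then have "f R'' = f (copies 2 R')"
    using pw R''(1) R' by (intro pairwise_SCCD) (simp_all add: is_profile_copies)
  then show ?thesis
    using R''(2) homogeneousD[OF hom R'] by simp
qed

lemma abs_le_sum_abs:
  fixes g :: "'a::finite \<Rightarrow> int"
  shows "\<bar>g c\<bar> \<le> (\<Sum>w\<in>UNIV. \<bar>g w\<bar>)"
  by (rule member_le_sum) auto

lemma set_non_imposingE:
  assumes "set_non_imposing f" "X \<noteq> {}"
  obtains R where "is_profile R" "f R = X"
  using assms by (auto simp: set_non_imposing_def)

lemma choice_eq_singleton_by_dominance:
  fixes f :: "('a::finite) profile \<Rightarrow> 'a set"
  assumes pw: "pairwise_SCC f" and sp: "strategyproof f" and hom: "homogeneous f"
    and R: "is_profile R" and fR: "f R = {x}" and S: "is_profile S" and fS: "f S = X"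
    and "x \<in> X" and "k \<ge> 1"
    and dominated: "\<And>w. w \<in> X \<Longrightarrow> majority_margin R x w \<le> int k * majority_margin S x w"
  shows "X = {x}"
proof -
  define n where "n = nat (\<Sum>w\<in>UNIV. \<bar>majority_margin R x w - int k * majority_margin S x w\<bar>)"
  have "is_profile (copies k S)" "f (copies k S) = X"
    using S fS homogeneousD[OF hom S \<open>k \<ge> 1\<close>] \<open>k \<ge> 1\<close> by (simp_all add: is_profile_copies)
  moreover have "choice_stable_shift f X (\<lambda>u w. int n * (2 * block_margin X u w))"
    by (intro choice_stable_shift_scale choice_stable_shift_block pw sp)
  ultimately obtain S' where S': "is_profile S'" "f S' = X"
    "majority_margin S'
      = (\<lambda>u w. majority_margin (copies k S) u w + int n * (2 * block_margin X u w))"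
    unfolding choice_stable_shift_def by blast
  have "majority_margin R x w \<le> majority_margin S' x w" for w
  proof (cases "w \<in> X")
    case True
    then show ?thesis
      using dominated \<open>x \<in> X\<close> S \<open>k \<ge> 1\<close> by (simp add: S'(3) majority_margin_copies block_margin_def)
  next
    case False
    have "majority_margin R x w - int k * majority_margin S x w \<le> int n"
      using abs_le_sum_abs[of "\<lambda>w. majority_margin R x w - int k * majority_margin S x w" w]
      unfolding n_def by linarith
    then show ?thesis
      using False \<open>x \<in> X\<close> S \<open>k \<ge> 1\<close> by (simp add: S'(3) majority_margin_copies block_margin_def)
  qed
  then have "f S' = {x}"
    by (rule singleton_choice_mono[OF pw sp hom R S'(1) fR])
  with S'(2) show ?thesis
    by simp
qed

lemma pair_choice_margin_nonneg:
  fixes f :: "('a::finite) profile \<Rightarrow> 'a set"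
  assumes pw: "pairwise_SCC f" and sp: "strategyproof f" and ni: "set_non_imposing f"
    and hom: "homogeneous f" and S: "is_profile S" and fS: "f S = {x, a}"
  shows "0 \<le> majority_margin S x a"
proof (rule ccontr)
  assume neg: "\<not> 0 \<le> majority_margin S x a"
  then have "1 \<le> majority_margin S a x"
    using majority_margin_antisym[of S x a] by simp
  obtain R where R: "is_profile R" "f R = {a}"
    using set_non_imposingE[OF ni, of "{a}"] by blast
  define k where "k = nat \<bar>majority_margin R a x\<bar> + 1"
  have dominated: "majority_margin R a w \<le> int k * majority_margin S a w" if "w \<in> {x, a}" for w
  proof (cases "w = a")
    case False
    then have "w = x" using that by simp
    have "majority_margin R a x \<le> int k * 1"
      by (simp add: k_def)
    also have "\<dots> \<le> int k * majority_margin S a x"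
      using \<open>1 \<le> majority_margin S a x\<close> by (intro mult_left_mono) simp_all
    finally show ?thesis using \<open>w = x\<close> by simp
  qed simp
  have "{x, a} = {a}"
    by (rule choice_eq_singleton_by_dominance[OF pw sp hom R S fS _ _ dominated])
      (simp_all add: k_def)
  then show False
    using neg by simp
qed

lemma condorcet_winner_if_singleton_choice:
  fixes f :: "('a::finite) profile \<Rightarrow> 'a set"
  assumes pw: "pairwise_SCC f" and sp: "strategyproof f" and ni: "set_non_imposing f"
    and hom: "homogeneous f" and R: "is_profile R" and fR: "f R = {x}"
  shows "condorcet_winner R x"
  unfolding condorcet_winner_def
proof (intro allI impI)
  fix a assume "a \<noteq> x"
  obtain S where S: "is_profile S" "f S = {x, a}"
    using set_non_imposingE[OF ni, of "{x, a}"] by blast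
  show "0 < majority_margin R x a"
  proof (rule ccontr)
    assume "\<not> 0 < majority_margin R x a"
    then have "majority_margin R x w \<le> int 1 * majority_margin S x w" if "w \<in> {x, a}" for w
      using that pair_choice_margin_nonneg[OF pw sp ni hom S] by auto
    then have "{x, a} = {x}"
      by (rule choice_eq_singleton_by_dominance[OF pw sp hom R fR S, rotated 2]) simp_all
    with \<open>a \<noteq> x\<close> show False
      by auto
  qed
qed

lemma singleton_choice_if_condorcet_winner:
  fixes f :: "('a::finite) profile \<Rightarrow> 'a set"
  assumes pw: "pairwise_SCC f" and sp: "strategyproof f" and ni: "set_non_imposing f"
    and hom: "homogeneous f" and R: "is_profile R" and winner: "condorcet_winner R x"
  shows "f R = {x}"
proof -
  obtain R0 where R0: "is_profile R0" "f R0 = {x}"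
    using set_non_imposingE[OF ni, of "{x}"] by blast
  define k where "k = nat (\<Sum>w\<in>UNIV. \<bar>majority_margin R0 x w\<bar>) + 1"
  have "majority_margin R0 x w \<le> majority_margin (copies k R) x w" for w
  proof (cases "w = x")
    case False
    then have "0 < majority_margin R x w"
      using winner by (simp add: condorcet_winner_def)
    have "majority_margin R0 x w \<le> int k * 1"
      using abs_le_sum_abs[of "majority_margin R0 x" w] by (simp add: k_def)
    also have "\<dots> \<le> int k * majority_margin R x w"
      using \<open>0 < majority_margin R x w\<close> by (intro mult_left_mono) simp_all
    finally show ?thesis
      using R by (simp add: majority_margin_copies k_def)
  qed simp
  then have "f (copies k R) = {x}"
    using R by (intro singleton_choice_mono[OF pw sp hom R0(1) _ R0(2)])
      (simp_all add: is_profile_copies k_def)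
  then show ?thesis
    using homogeneousD[OF hom R] by (simp add: k_def)
qed

theorem lemma13:
  fixes f :: "('a::finite) profile \<Rightarrow> 'a set"
  assumes "is_SCC f"
    and "pairwise_SCC f"
    and "set_non_imposing f"
    and "homogeneous f"
    and "strategyproof f"
  shows "strongly_condorcet_consistent f"
  unfolding strongly_condorcet_consistent_def
  using singleton_choice_if_condorcet_winner[OF assms(2,5,3,4)]
    condorcet_winner_if_singleton_choice[OF assms(2,5,3,4)] by blast

end
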